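(* Let $K\ge2$, $p\in(0,1)$, $M>0$. For every $f\in\mathcal M_p$, the ranking output by \textsc{NP} with parameter $M$ satisfies $$\mathbb P(\sigma_{\mathrm{out}}\neq\sigma_f)\le(K-1)\,p^M.$$
   Context: Items are $[K]=\{1,\dots,K\}$, $\mathcal S=\{S\subseteq[K]:|S|\ge2\}$. A preference $f$ is a family of numbers $f(i\mid S)$. For $p\in(0,1)$, $\mathcal M_p$ consists of all $f$ with (i) $f(i\mid S)>0$ iff $i\in S$; (ii) $\sum_{i\in S}f(i\mid S)=1$; (iii) a bijection $\sigma_f:[K]\to[K]$ (the ranking; $\sigma_f(i)=k$ means $i$ is in position $k$) with $f(i\mid S)\le pf(i'\mid S)$ whenever $i,i'\in S$, $\sigma_f(i')<\sigma_f(i)$. Interaction: at each time $t$ a display set $S_t$ is chosen based on the past and a choice $X_t\in S_t$ is observed with conditional law $f(\cdot\mid S_t)$. Algorithm \textsc{NP} (Nested Partition) with parameter $M>0$: global scores $W_0(i)=0$ and a global timer $t=0$. Recursive subroutine $\textsc{Partition}(S)$ returning an ordered list of the elements of $S$: if $|S|=1$ return $S$. Otherwise repeat: $t\leftarrow t+1$; display $S$, observe $X_t$; $W_t(X_t)=W_{t-1}(X_t)+1$, other scores unchanged; order $S$ as $\pi_t(1),\dots,\pi_t(|S|)$ with nonincreasing $W_t$; if there is $k$ with $W_t(\pi_t(k))-W_t(\pi_t(k+1))\ge M$, set $S_{\mathrm{high}}=\{\pi_t(1),\dots,\pi_t(k)\}$, $S_{\mathrm{low}}=S\setminus S_{\mathrm{high}}$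 and return the concatenation of $\textsc{Partition}(S_{\mathrm{high}})$ followed by $\textsc{Partition}(S_{\mathrm{low}})$ (the former executed first). The master routine computes $\pi_{\mathrm{out}}=\textsc{Partition}([K])$ (a bijection $[K]\to[K]$ listing items from best to worst) and outputs $\sigma_{\mathrm{out}}=\pi_{\mathrm{out}}^{-1}$. *)

theory Defs
  imports "HOL-Probability.Probability"
begin

definition setsK :: "nat \<Rightarrow> nat set set" where
  "setsK K = {S. S \<subseteq> {1..K} \<and> card S \<ge> 2}"

(* f i S stands for f(i | S).  Membership in M_p together with a ranking sigma. *)
definition is_pref :: "nat \<Rightarrow> (nat \<Rightarrow> nat set \<Rightarrow> real) \<Rightarrow> bool" where
  "is_pref K f \<longleftrightarrow>
     (\<forall>S\<in>setsK K. (\<forall>i\<in>{1..K}. f i S > 0 \<longleftrightarrow> i \<in> S) \<and> (\<Sum>i\<in>S. f i S) = 1)"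

definition is_ranking :: "nat \<Rightarrow> real \<Rightarrow> (nat \<Rightarrow> nat set \<Rightarrow> real) \<Rightarrow> (nat \<Rightarrow> nat) \<Rightarrow> bool" where
  "is_ranking K p f \<sigma> \<longleftrightarrow> bij_betw \<sigma> {1..K} {1..K} \<and>
     (\<forall>S\<in>setsK K. \<forall>i\<in>S. \<forall>i'\<in>S. \<sigma> i' < \<sigma> i \<longrightarrow> f i S \<le> p * f i' S)"

definition choice_pmf :: "nat \<Rightarrow> (nat \<Rightarrow> nat set \<Rightarrow> real) \<Rightarrow> nat set \<Rightarrow> nat pmf" where
  "choice_pmf K f S = (if S \<in> setsK K then embed_pmf (\<lambda>i. if i \<in> S then f i S else 0)
                       else return_pmf 0)"

(* At each time step an independent "choice function" is drawn: for every candidate display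
   set S an independent choice with law f(.|S).  The observed choice at time t is the value at
   the actually displayed set S_t; since the draw at time t is independent of the past, the
   conditional law of X_t given the past is f(.|S_t). *)
definition choice_fun_pmf :: "nat \<Rightarrow> (nat \<Rightarrow> nat set \<Rightarrow> real) \<Rightarrow> (nat set \<Rightarrow> nat) pmf" where
  "choice_fun_pmf K f = Pi_pmf (Pow {1..K}) 0 (choice_pmf K f)"

definition Omega :: "nat \<Rightarrow> (nat \<Rightarrow> nat set \<Rightarrow> real) \<Rightarrow> (nat \<Rightarrow> (nat set \<Rightarrow> nat)) measure" where
  "Omega K f = PiM UNIV (\<lambda>_::nat. measure_pmf (choice_fun_pmf K f))"

(* State of NP: global scores W, stack of pending calls Partition(S) (head executed next),
   output list produced so far (items from best to worst). *)
type_synonym np_state = "(nat \<Rightarrow> nat) \<times> nat set list \<times> nat list"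

(* Calls Partition(S) with |S| <= 1 return immediately without using time. *)
fun np_norm :: "np_state \<Rightarrow> np_state" where
  "np_norm (W, [], out) = (W, [], out)"
| "np_norm (W, S # st, out) =
     (if card S \<le> 1 then np_norm (W, st, out @ sorted_list_of_set S) else (W, S # st, out))"

fun np_step :: "real \<Rightarrow> (nat set \<Rightarrow> nat) \<Rightarrow> np_state \<Rightarrow> np_state" where
  "np_step M c (W, [], out) = (W, [], out)"
| "np_step M c (W, S # st, out) =
     (let x = c S;
          W' = W(x := Suc (W x));
          L = sort_key (\<lambda>i. - int (W' i)) (sorted_list_of_set S);
          cuts = {k. 0 < k \<and> k < length L \<and> real (W' (L ! (k - 1))) - real (W' (L ! k)) \<ge> M}
      in if cuts = {} then (W', S # st, out)
         else (let k = Min cuts in np_norm (W', set (take k L) # set (drop k L) # st, out)))"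

fun np_run :: "nat \<Rightarrow> real \<Rightarrow> (nat \<Rightarrow> (nat set \<Rightarrow> nat)) \<Rightarrow> nat \<Rightarrow> np_state" where
  "np_run K M \<omega> 0 = np_norm (\<lambda>_. 0, [{1..K}], [])"
| "np_run K M \<omega> (Suc t) = np_step M (\<omega> t) (np_run K M \<omega> t)"

(* NP terminates and outputs pi_out with sigma_out = pi_out^{-1} = sigma. *)
definition np_correct :: "nat \<Rightarrow> real \<Rightarrow> (nat \<Rightarrow> nat) \<Rightarrow> (nat \<Rightarrow> (nat set \<Rightarrow> nat)) \<Rightarrow> bool" where
  "np_correct K M \<sigma> \<omega> \<longleftrightarrow>
     (\<exists>t. fst (snd (np_run K M \<omega> t)) = [] \<and>
          (let out = snd (snd (np_run K M \<omega> t)) in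
             length out = K \<and> (\<forall>k<K. \<sigma> (out ! k) = Suc k)))"

end

theory Submission
  imports Defs
begin

text \<open>
  Every NP state determines an ordered partition of the items into blocks: the output items as
  singletons followed by the pending calls. For items \<open>a, b\<close> adjacent in the true ranking
  (\<open>a\<close> better) take the potential \<open>p powr (M - (W b - W a))\<close> while they share a block, \<open>1\<close> once
  \<open>b\<close>'s block precedes \<open>a\<close>'s and \<open>0\<close> once \<open>a\<close>'s block precedes \<open>b\<close>'s. Choosing \<open>b\<close> multiplies
  the first value by \<open>1/p\<close>, choosing \<open>a\<close> by \<open>p\<close>, and \<open>f(b|S) \<le> p f(a|S)\<close>; a split putting
  \<open>b\<close> first needs \<open>W b - W a \<ge> M\<close>, where the value is \<open>\<ge> 1\<close> already. So the sum \<open>\<Phi>\<close> over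
  the \<open>K - 1\<close> adjacent pairs is a supermartingale starting at \<open>(K - 1) p powr M\<close>, and \<open>\<Phi> \<ge> 1\<close>
  on every terminated run with a wrong output. Finally NP terminates almost surely: repeating the
  current favourite \<open>\<lceil>M\<rceil>\<close> times splits the current block, so this happens with probability at
  least \<open>\<delta> ^ \<lceil>M\<rceil>\<close> (\<open>\<delta>\<close> the least choice probability) within any \<open>\<lceil>M\<rceil>\<close> steps, and
  \<open>2 ^ (K - #blocks)\<close> on unfinished runs decays geometrically in expectation.
\<close>

section \<open>Ordered partitions into blocks\<close>

lemma disjoint_family_on_nth_unique:
  assumes "disjoint_family_on ((!) X) {..<length X}" "u < length X" "v < length X"
    and "i \<in> X ! u" "i \<in> X ! v"
  shows "u = v"
  using assms unfolding disjoint_family_on_def by blast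

definition ordered_partition :: "'a set list \<Rightarrow> 'a set \<Rightarrow> bool" where
  "ordered_partition X U \<longleftrightarrow>
     disjoint_family_on ((!) X) {..<length X} \<and> {} \<notin> set X \<and> \<Union>(set X) = U"

lemma ordered_partition_length:
  assumes X: "ordered_partition X U" and "finite U"
  shows "length X \<le> card U"
    and "u < length X \<Longrightarrow> 2 \<le> card (X ! u) \<Longrightarrow> length X < card U"
proof -
  have U: "U = (\<Union>u\<in>{..<length X}. X ! u)"
    using X by (auto simp: ordered_partition_def set_conv_nth)
  have fin: "\<forall>u\<in>{..<length X}. finite (X ! u)"
    using U \<open>finite U\<close> by (auto intro: finite_subset)
  have card_U: "card U = (\<Sum>u<length X. card (X ! u))"
    unfolding U using X fin
    by (intro card_UN_disjoint) (auto simp: ordered_partition_def disjoint_family_on_def)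
  have ge1: "1 \<le> card (X ! u)" if "u < length X" for u
  proof -
    have "X ! u \<noteq> {}" using X nth_mem[OF that] unfolding ordered_partition_def by metis
    then show ?thesis using fin that by (simp add: Suc_le_eq card_gt_0_iff)
  qed
  have "length X = (\<Sum>u<length X. 1)" by simp
  also have "\<dots> \<le> card U" unfolding card_U using ge1 by (intro sum_mono) auto
  finally show "length X \<le> card U" .
  assume u: "u < length X" and "2 \<le> card (X ! u)"
  have "(\<Sum>v<length X. 1) < (\<Sum>v<length X. card (X ! v))"
    using u ge1 \<open>2 \<le> card (X ! u)\<close> by (intro sum_strict_mono_ex1) (auto intro!: bexI[of _ u])
  then show "length X < card U" unfolding card_U by simp
qed

definition same_block :: "'a set list \<Rightarrow> 'a \<Rightarrow> 'a \<Rightarrow> bool" where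
  "same_block X i j \<longleftrightarrow> (\<exists>u<length X. i \<in> X ! u \<and> j \<in> X ! u)"

definition block_before :: "'a set list \<Rightarrow> 'a \<Rightarrow> 'a \<Rightarrow> bool" where
  "block_before X i j \<longleftrightarrow> (\<exists>u v. u < v \<and> v < length X \<and> i \<in> X ! u \<and> j \<in> X ! v)"

lemma same_block_commute: "same_block X i j = same_block X j i"
  unfolding same_block_def by blast

lemma block_before_exclusive:
  assumes "disjoint_family_on ((!) X) {..<length X}" "block_before X i j"
  shows "\<not> block_before X j i" "\<not> same_block X i j"
proof -
  note unique = disjoint_family_on_nth_unique[OF assms(1)]
  from assms(2) obtain u v where uv: "u < v" "v < length X" "i \<in> X ! u" "j \<in> X ! v"
    unfolding block_before_def by blast
  show "\<not> block_before X j i"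
  proof
    assume "block_before X j i"
    then obtain u' v' where "u' < v'" "v' < length X" "j \<in> X ! u'" "i \<in> X ! v'"
      unfolding block_before_def by blast
    with uv unique[of u v' i] unique[of v u' j] show False by simp
  qed
  show "\<not> same_block X i j"
  proof
    assume "same_block X i j"
    then obtain w where "w < length X" "i \<in> X ! w" "j \<in> X ! w"
      unfolding same_block_def by blast
    with uv unique[of u w i] unique[of v w j] show False by simp
  qed
qed

lemma same_block_outside:
  assumes "disjoint_family_on ((!) X) {..<length X}" "w < length X"
    and "same_block X a b" "\<not> (a \<in> X ! w \<and> b \<in> X ! w)"
  shows "a \<notin> X ! w" "b \<notin> X ! w"
  using assms disjoint_family_on_nth_unique[OF assms(1)] unfolding same_block_def by metis+

lemma nth_split_block:
  "u < length (P @ A # B # T) \<Longrightarrow> (P @ A # B # T) ! u =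
     (if u < length P then P ! u else if u = length P then A
      else if u = Suc (length P) then B else T ! (u - length P - 2))"
  by (auto simp: nth_append nth_Cons split: nat.split) (rule arg_cong[where f="(!) T"]; linarith)

lemma nth_block:
  "u < length (P @ S # T) \<Longrightarrow> (P @ S # T) ! u =
     (if u < length P then P ! u else if u = length P then S else T ! (u - length P - 1))"
  by (auto simp: nth_append nth_Cons split: nat.split) (rule arg_cong[where f="(!) T"]; linarith)

context
  fixes P T :: "'a set list" and S A B :: "'a set"
  assumes split: "A \<union> B = S"
begin

definition merge_index :: "nat \<Rightarrow> nat" where
  "merge_index u =
     (if u < length P then u else if u = length P \<or> u = Suc (length P) then length P else u - 1)"

lemma merge_index:
  "u < length (P @ A # B # T) \<Longrightarrow>
     (P @ A # B # T) ! u \<subseteq> (P @ S # T) ! merge_index u \<and> merge_index u < length (P @ S # T)"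
  using split by (auto simp: nth_split_block nth_block merge_index_def)

lemma same_block_split:
  assumes "\<not> (i \<in> S \<and> j \<in> S)"
  shows "same_block (P @ A # B # T) i j = same_block (P @ S # T) i j"
proof
  assume "same_block (P @ A # B # T) i j"
  then obtain u where "u < length (P @ A # B # T)" "i \<in> (P @ A # B # T) ! u" "j \<in> (P @ A # B # T) ! u"
    unfolding same_block_def by blast
  then show "same_block (P @ S # T) i j"
    unfolding same_block_def using merge_index by blast
next
  assume "same_block (P @ S # T) i j"
  then obtain u where u: "u < length (P @ S # T)" "i \<in> (P @ S # T) ! u" "j \<in> (P @ S # T) ! u"
    unfolding same_block_def by blast
  have "u \<noteq> length P" using u assms by (auto simp: nth_append)
  then consider "u < length P" | "u > length P" by linarith
  then show "same_block (P @ A # B # T) i j"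
  proof cases
    case 1
    then show ?thesis using u unfolding same_block_def
      by (intro exI[of _ u]) (auto simp: nth_split_block nth_block)
  next
    case 2
    then show ?thesis using u unfolding same_block_def
      by (intro exI[of _ "Suc u"]) (auto simp: nth_split_block nth_block)
  qed
qed

lemma block_before_split:
  assumes ij: "\<not> (i \<in> S \<and> j \<in> S)"
  shows "block_before (P @ A # B # T) i j = block_before (P @ S # T) i j"
proof
  assume "block_before (P @ A # B # T) i j"
  then obtain u v where uv: "u < v" "v < length (P @ A # B # T)"
      "i \<in> (P @ A # B # T) ! u" "j \<in> (P @ A # B # T) ! v"
    unfolding block_before_def by blast
  have i: "i \<in> (P @ S # T) ! merge_index u" using merge_index[of u] uv by auto
  have j: "j \<in> (P @ S # T) ! merge_index v" "merge_index v < length (P @ S # T)"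
    using merge_index[of v] uv by auto
  have "merge_index u \<noteq> merge_index v"
  proof
    assume eq: "merge_index u = merge_index v"
    with uv(1) have "merge_index u = length P" by (auto simp: merge_index_def split: if_splits)
    with i j eq ij show False by (auto simp: nth_block)
  qed
  moreover have "merge_index u \<le> merge_index v" using uv(1) by (auto simp: merge_index_def)
  ultimately show "block_before (P @ S # T) i j"
    unfolding block_before_def using i j by (metis le_neq_implies_less)
next
  assume "block_before (P @ S # T) i j"
  then obtain u v where uv: "u < v" "v < length (P @ S # T)" "i \<in> (P @ S # T) ! u" "j \<in> (P @ S # T) ! v"
    unfolding block_before_def by blast
  define h where
    "h w k = (if w < length P then w else if w = length P then (if k \<in> A then w else Suc w) else Suc w)"
    for w k
  have h: "k \<in> (P @ A # B # T) ! h w k \<and> h w k < length (P @ A # B # T)"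
    if "w < length (P @ S # T)" "k \<in> (P @ S # T) ! w" for w k
    using split that by (auto simp: h_def nth_split_block nth_block)
  have "h u i < h v j" using uv ij split by (auto simp: h_def nth_block)
  then show "block_before (P @ A # B # T) i j"
    unfolding block_before_def using h[of u i] h[of v j] uv by (metis less_trans)
qed

lemma block_before_split_halves: "i \<in> A \<Longrightarrow> j \<in> B \<Longrightarrow> block_before (P @ A # B # T) i j"
  unfolding block_before_def
  by (intro exI[of _ "length P"] exI[of _ "Suc (length P)"]) (auto simp: nth_append)

lemma same_block_split_half:
  "i \<in> A \<Longrightarrow> j \<in> A \<Longrightarrow> same_block (P @ A # B # T) i j"
  "i \<in> B \<Longrightarrow> j \<in> B \<Longrightarrow> same_block (P @ A # B # T) i j"
  unfolding same_block_def
  by (intro exI[of _ "length P"], simp add: nth_append)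
     (intro exI[of _ "Suc (length P)"], simp add: nth_append)

lemma ordered_partition_split:
  assumes X: "ordered_partition (P @ S # T) U"
    and AB: "A \<inter> B = {}" "A \<noteq> {}" "B \<noteq> {}"
  shows "ordered_partition (P @ A # B # T) U"
proof -
  have "disjoint_family_on ((!) (P @ A # B # T)) {..<length (P @ A # B # T)}"
    unfolding disjoint_family_on_def
  proof (intro ballI impI)
    fix u v assume uv: "u \<in> {..<length (P @ A # B # T)}" "v \<in> {..<length (P @ A # B # T)}" "u \<noteq> v"
    show "(P @ A # B # T) ! u \<inter> (P @ A # B # T) ! v = {}"
    proof (cases "merge_index u = merge_index v")
      case True
      with uv have "{u, v} = {length P, Suc (length P)}"
        by (auto simp: merge_index_def split: if_splits)
      then show ?thesis using AB by (auto simp: nth_append doubleton_eq_iff)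
    next
      case False
      then show ?thesis
        using X merge_index[of u] merge_index[of v] uv
        unfolding ordered_partition_def disjoint_family_on_def by blast
    qed
  qed
  moreover have "\<Union>(set (P @ A # B # T)) = \<Union>(set (P @ S # T))" using split by auto
  ultimately show ?thesis using X AB unfolding ordered_partition_def by auto
qed

end

lemma block_before_singletons:
  "u < v \<Longrightarrow> v < length xs \<Longrightarrow> block_before (map (\<lambda>i. {i}) xs) (xs ! u) (xs ! v)"
  unfolding block_before_def by (intro exI[of _ u] exI[of _ v]) auto

lemma same_block_head:
  "a \<in> S \<Longrightarrow> b \<in> S \<Longrightarrow> same_block (P @ S # T) a b"
  unfolding same_block_def by (intro exI[of _ "length P"]) (simp add: nth_append)

section \<open>Steps and runs of NP\<close>

definition blocks :: "np_state \<Rightarrow> nat set list" where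
  "blocks s = map (\<lambda>i. {i}) (snd (snd s)) @ fst (snd s)"

definition leads_by :: "real \<Rightarrow> ('a \<Rightarrow> nat) \<Rightarrow> 'a set \<Rightarrow> 'a \<Rightarrow> bool" where
  "leads_by M W S y \<longleftrightarrow> (\<forall>z\<in>S - {y}. real (W z) + M \<le> real (W y))"

lemma np_norm_blocks:
  assumes "\<forall>B\<in>set st. B \<noteq> {} \<and> finite B"
  shows "blocks (np_norm (W, st, out)) = blocks (W, st, out) \<and> fst (np_norm (W, st, out)) = W
     \<and> (fst (snd (np_norm (W, st, out))) \<noteq> [] \<longrightarrow> 2 \<le> card (hd (fst (snd (np_norm (W, st, out))))))"
  using assms
proof (induction st arbitrary: out)
  case Nil
  then show ?case by (simp add: blocks_def)
next
  case (Cons S st)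
  show ?case
  proof (cases "card S \<le> 1")
    case True
    from Cons.prems have "S \<noteq> {}" "finite S" by auto
    with True obtain i where "S = {i}"
      by (metis card_1_singletonE card_0_eq le_Suc_eq One_nat_def le_zero_eq)
    with Cons show ?thesis by (auto simp: blocks_def)
  next
    case False
    then show ?thesis by (simp add: blocks_def)
  qed
qed

lemma sort_key_nth_score_antimono:
  fixes W :: "'a \<Rightarrow> nat"
  assumes "u \<le> v" "v < length (sort_key (\<lambda>i. - int (W i)) xs)"
  shows "W (sort_key (\<lambda>i. - int (W i)) xs ! v) \<le> W (sort_key (\<lambda>i. - int (W i)) xs ! u)"
proof -
  let ?L = "sort_key (\<lambda>i. - int (W i)) xs"
  have "sorted (map (\<lambda>i. - int (W i)) ?L)" by (rule sorted_sort_key)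
  then have "map (\<lambda>i. - int (W i)) ?L ! u \<le> map (\<lambda>i. - int (W i)) ?L ! v"
    using assms by (intro sorted_nth_mono) auto
  then show ?thesis using assms by simp
qed

lemma leader_first_gap:
  fixes W :: "'a \<Rightarrow> nat"
  assumes M: "0 < M" and L: "2 \<le> length L" "distinct L"
    and antimono: "\<And>u v. u \<le> v \<Longrightarrow> v < length L \<Longrightarrow> W (L ! v) \<le> W (L ! u)"
    and lead: "y \<in> set L" "leads_by M W (set L) y"
  shows "M \<le> real (W (L ! 0)) - real (W (L ! 1))"
proof -
  obtain q where q: "q < length L" "L ! q = y" using lead(1) by (metis in_set_conv_nth)
  have L0: "L ! 0 = y"
  proof (rule ccontr)
    assume "L ! 0 \<noteq> y"
    moreover have "L ! 0 \<in> set L" using L(1) by (metis nth_mem order.strict_trans2 pos2)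
    ultimately have "real (W (L ! 0)) + M \<le> real (W y)" using lead(2) by (auto simp: leads_by_def)
    with antimono[of 0 q] q M show False by simp
  qed
  have "L ! 1 \<noteq> y" using L L0 nth_eq_iff_index_eq[of L 1 0] by fastforce
  moreover have "L ! 1 \<in> set L" using L(1) by (metis nth_mem Suc_1 Suc_le_lessD)
  ultimately have "real (W (L ! 1)) + M \<le> real (W (L ! 0))"
    using lead(2) L0 unfolding leads_by_def by blast
  then show ?thesis by simp
qed

lemma gap_at_cut:
  fixes W :: "'a \<Rightarrow> nat"
  assumes antimono: "\<And>u v. u \<le> v \<Longrightarrow> v < length L \<Longrightarrow> W (L ! v) \<le> W (L ! u)"
    and k: "k < length L" "M \<le> real (W (L ! (k - 1))) - real (W (L ! k))"
  shows "\<forall>i\<in>set (take k L). \<forall>j\<in>set (drop k L). real (W j) + M \<le> real (W i)"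
proof (intro ballI)
  fix i j assume "i \<in> set (take k L)" "j \<in> set (drop k L)"
  obtain u where "u < k" "i = L ! u"
    using \<open>i \<in> set (take k L)\<close> by (auto simp: in_set_conv_nth)
  moreover obtain v where "k + v < length L" "j = L ! (k + v)"
    using \<open>j \<in> set (drop k L)\<close> k(1) by (auto simp: in_set_conv_nth less_diff_conv add.commute)
  ultimately have "W (L ! (k - 1)) \<le> W i" "W j \<le> W (L ! k)"
    using antimono[of u "k - 1"] antimono[of k "k + v"] k(1) by auto
  then show "real (W j) + M \<le> real (W i)" using k(2) by simp
qed

lemma np_step_cases:
  fixes M :: real
  assumes fin: "finite S" and M: "M > 0" and card: "2 \<le> card S"
    and st: "\<forall>B\<in>set st. B \<noteq> {} \<and> finite B"
  obtains (stay) "np_step M c (W, S # st, out) = (W(c S := Suc (W (c S))), S # st, out)"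
      "\<forall>y\<in>S. \<not> leads_by M (W(c S := Suc (W (c S)))) S y"
  | (split) A B where
      "blocks (np_step M c (W, S # st, out)) = map (\<lambda>i. {i}) out @ A # B # st"
      "fst (np_step M c (W, S # st, out)) = W(c S := Suc (W (c S)))"
      "A \<union> B = S" "A \<inter> B = {}" "A \<noteq> {}" "B \<noteq> {}"
      "\<forall>i\<in>A. \<forall>j\<in>B. real ((W(c S := Suc (W (c S)))) j) + M \<le> real ((W(c S := Suc (W (c S)))) i)"
      "fst (snd (np_step M c (W, S # st, out))) \<noteq> [] \<Longrightarrow>
         2 \<le> card (hd (fst (snd (np_step M c (W, S # st, out)))))"
proof -
  define W' where "W' = W(c S := Suc (W (c S)))"
  define L where "L = sort_key (\<lambda>i. - int (W' i)) (sorted_list_of_set S)"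
  have L: "set L = S" "distinct L" "length L = card S" using fin by (simp_all add: L_def)
  have antimono: "W' (L ! v) \<le> W' (L ! u)" if "u \<le> v" "v < length L" for u v
    using sort_key_nth_score_antimono that unfolding L_def by blast
  define cuts where
    "cuts = {k. 0 < k \<and> k < length L \<and> real (W' (L ! (k - 1))) - real (W' (L ! k)) \<ge> M}"
  have step_eq: "np_step M c (W, S # st, out) =
     (if cuts = {} then (W', S # st, out)
      else (let k = Min cuts in np_norm (W', set (take k L) # set (drop k L) # st, out)))"
    unfolding np_step.simps Let_def W'_def[symmetric] L_def[symmetric] cuts_def[symmetric] by (rule refl)
  show thesis
  proof (cases "cuts = {}")
    case True
    have "\<not> leads_by M W' S y" if "y \<in> S" for y
    proof
      assume "leads_by M W' S y"
      then have "M \<le> real (W' (L ! 0)) - real (W' (L ! 1))"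
        using leader_first_gap[where W = W', OF M _ L(2) antimono] that L(1,3) card by auto
      then have "1 \<in> cuts" unfolding cuts_def using L(3) card by auto
      with True show False by simp
    qed
    then show thesis using stay True step_eq unfolding W'_def by simp
  next
    case False
    define k where "k = Min cuts"
    have "k \<in> cuts" using False unfolding k_def cuts_def by (intro Min_in) auto
    then have k: "0 < k" "k < length L" "real (W' (L ! (k - 1))) - real (W' (L ! k)) \<ge> M"
      unfolding cuts_def by auto
    define A where "A = set (take k L)"
    define B where "B = set (drop k L)"
    have AB: "A \<union> B = S" "A \<inter> B = {}" "A \<noteq> {}" "B \<noteq> {}"
      unfolding A_def B_def using L(1,2) k
      by (metis set_append append_take_drop_id, metis append_take_drop_id distinct_append, auto)
    have gap: "\<forall>i\<in>A. \<forall>j\<in>B. real (W' j) + M \<le> real (W' i)"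
      unfolding A_def B_def using k(2,3) by (intro gap_at_cut antimono) auto
    have "\<forall>B'\<in>set (A # B # st). B' \<noteq> {} \<and> finite B'"
      using st AB(3,4) unfolding A_def B_def by auto
    note norm = np_norm_blocks[OF this, of W' out]
    have "np_step M c (W, S # st, out) = np_norm (W', A # B # st, out)"
      using step_eq False by (simp add: Let_def A_def B_def k_def)
    with norm AB gap show thesis
      by (intro split[of A B]) (simp_all add: blocks_def W'_def)
  qed
qed

declare np_step.simps(2) [simp del]

text \<open>
  Unlike \<open>np_run\<close>, \<open>run_from\<close> consumes \<open>\<omega> 0\<close> first and recurses on the shifted sequence, so
  that the first choice function can be integrated out first.
\<close>

fun run_from :: "real \<Rightarrow> np_state \<Rightarrow> (nat \<Rightarrow> nat set \<Rightarrow> nat) \<Rightarrow> nat \<Rightarrow> np_state" where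
  "run_from M s \<omega> 0 = s"
| "run_from M s \<omega> (Suc n) = run_from M (np_step M (\<omega> 0) s) (\<lambda>k. \<omega> (Suc k)) n"

lemma run_from_Suc_last: "run_from M s \<omega> (Suc n) = np_step M (\<omega> n) (run_from M s \<omega> n)"
proof (induction n arbitrary: s \<omega>)
  case (Suc n)
  have "run_from M s \<omega> (Suc (Suc n)) = run_from M (np_step M (\<omega> 0) s) (\<lambda>k. \<omega> (Suc k)) (Suc n)"
    by simp
  also have "\<dots> = np_step M (\<omega> (Suc n)) (run_from M (np_step M (\<omega> 0) s) (\<lambda>k. \<omega> (Suc k)) n)"
    by (rule Suc.IH)
  also have "\<dots> = np_step M (\<omega> (Suc n)) (run_from M s \<omega> (Suc n))"
    by simp
  finally show ?case .
qed simp

lemma np_run_eq_run_from: "np_run K M \<omega> t = run_from M (np_norm (\<lambda>_. 0, [{1..K}], [])) \<omega> t"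
  by (induction t) (simp_all only: np_run.simps run_from.simps(1) run_from_Suc_last)

lemma run_from_terminated: "run_from M (W, [], out) \<omega> n = (W, [], out)"
  by (induction n arbitrary: \<omega>) simp_all

lemma np_step_head_choice: "np_step M c (W, S # st, out) = np_step M (\<lambda>_. c S) (W, S # st, out)"
  by (simp only: np_step.simps Let_def)

lemma sum_tilt_le_one:
  fixes F :: "'a \<Rightarrow> real"
  assumes "finite S" "a \<in> S" "b \<in> S" "a \<noteq> b" "sum F S = 1"
    and "F b \<le> p * F a" "0 < p" "p \<le> 1"
  shows "(\<Sum>x\<in>S. F x * (if x = b then inverse p else if x = a then p else 1)) \<le> 1"
proof -
  have "F x * (if x = b then inverse p else if x = a then p else 1) =
      F x + (if x = b then F x * (inverse p - 1) else 0) + (if x = a then F x * (p - 1) else 0)" for x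
    using assms(4) by (auto simp: algebra_simps)
  then have "(\<Sum>x\<in>S. F x * (if x = b then inverse p else if x = a then p else 1)) =
      sum F S + F b * (inverse p - 1) + F a * (p - 1)"
    using assms(1-3) by (simp add: sum.distrib)
  also have "F b * (inverse p - 1) \<le> (p * F a) * (inverse p - 1)"
    using assms(6-8) by (intro mult_right_mono) (auto simp: field_simps)
  also have "(p * F a) * (inverse p - 1) = F a * (1 - p)"
    using assms(7) by (simp add: field_simps)
  finally show ?thesis using assms(5) by (simp add: algebra_simps)
qed

lemma powr_score_gap_step:
  fixes W :: "'a \<Rightarrow> nat" and p :: real
  assumes "0 < p" "a \<noteq> b"
  shows "p powr (M - (real ((W(x := Suc (W x))) b) - real ((W(x := Suc (W x))) a))) =
         p powr (M - (real (W b) - real (W a))) * (if x = b then inverse p else if x = a then p else 1)"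
proof -
  let ?e = "M - (real (W b) - real (W a))"
  consider "x = b" | "x = a" | "x \<noteq> a" "x \<noteq> b" by blast
  then show ?thesis
  proof cases
    case 1
    then have "p powr (?e - 1) = p powr ?e * inverse p"
      using assms by (simp add: powr_diff divide_inverse)
    with 1 assms(2) show ?thesis by (simp add: algebra_simps)
  next
    case 2
    then have "p powr (?e + 1) = p powr ?e * p"
      using assms by (simp add: powr_add)
    with 2 assms(2) show ?thesis by (simp add: algebra_simps)
  qed simp
qed

lemma strict_mono_bounded_eq_pred:
  fixes q :: "nat \<Rightarrow> nat"
  assumes inc: "\<And>k. 1 \<le> k \<Longrightarrow> k < K \<Longrightarrow> q k < q (Suc k)"
    and bnd: "\<And>k. 1 \<le> k \<Longrightarrow> k \<le> K \<Longrightarrow> q k < K"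
    and k: "1 \<le> k" "k \<le> K"
  shows "q k = k - 1"
proof -
  have shift: "q k' + j \<le> q (k' + j)" if "1 \<le> k'" "k' + j \<le> K" for k' j
    using that
  proof (induction j)
    case (Suc j)
    then have "q k' + j \<le> q (k' + j)" by simp
    moreover have "q (k' + j) < q (Suc (k' + j))" using Suc.prems by (intro inc) auto
    ultimately show ?case by simp
  qed simp
  have "k - 1 \<le> q k" using shift[of 1 "k - 1"] k by simp
  moreover have "q k + (K - k) \<le> q K" using shift[of k "K - k"] k by simp
  ultimately show ?thesis using bnd[of K] k by simp
qed

lemma ennreal_power_Suc_le_mult:
  fixes d x :: real
  assumes "0 \<le> d" "d \<le> x"
  shows "ennreal (d ^ Suc n) \<le> ennreal (d ^ n) * ennreal x"
proof -
  have "d ^ Suc n \<le> d ^ n * x" using assms by (simp add: mult.commute mult_right_mono)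
  then show ?thesis using assms by (simp add: ennreal_mult[symmetric] ennreal_leI)
qed

locale np_setting =
  fixes K :: nat and p M :: real and f :: "nat \<Rightarrow> nat set \<Rightarrow> real" and \<sigma> :: "nat \<Rightarrow> nat"
  assumes K: "K \<ge> 2" and p_pos: "0 < p" and p_less_1: "p < 1" and M_pos: "M > 0"
    and pref: "is_pref K f" and ranking: "is_ranking K p f \<sigma>"
begin

lemma choice_prob_sum: "S \<in> setsK K \<Longrightarrow> (\<Sum>i\<in>S. f i S) = 1"
  and choice_prob_pos: "S \<in> setsK K \<Longrightarrow> i \<in> S \<Longrightarrow> f i S > 0"
  using pref unfolding is_pref_def setsK_def by auto

lemma choice_prob_ranked:
  "S \<in> setsK K \<Longrightarrow> i \<in> S \<Longrightarrow> i' \<in> S \<Longrightarrow> \<sigma> i' < \<sigma> i \<Longrightarrow> f i S \<le> p * f i' S"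
  using ranking unfolding is_ranking_def by blast

definition np_inv :: "np_state \<Rightarrow> bool" where
  "np_inv s \<longleftrightarrow> ordered_partition (blocks s) {1..K} \<and>
     (fst (snd s) \<noteq> [] \<longrightarrow> 2 \<le> card (hd (fst (snd s))))"

lemma np_inv_head:
  assumes "np_inv (W, S # st, out)"
  shows "S \<in> setsK K" "finite S" "2 \<le> card S" "\<forall>B\<in>set st. B \<noteq> {} \<and> finite B"
proof -
  have part: "ordered_partition (map (\<lambda>i. {i}) out @ S # st) {1..K}"
    using assms by (simp add: np_inv_def blocks_def)
  then have sub: "B \<subseteq> {1..K}" "B \<noteq> {}" if "B \<in> set (S # st)" for B
    using that unfolding ordered_partition_def by auto
  show "2 \<le> card S" using assms by (simp add: np_inv_def)
  then show "S \<in> setsK K" using sub[of S] by (simp add: setsK_def)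
  show "finite S" using sub[of S] finite_subset by auto
  show "\<forall>B\<in>set st. B \<noteq> {} \<and> finite B"
    using sub finite_subset by (meson finite_atLeastAtMost list.set_intros(2))
qed

lemma np_inv_step:
  assumes inv: "np_inv s"
  shows "np_inv (np_step M c s)"
proof -
  obtain W st out where s: "s = (W, st, out)" by (cases s)
  show ?thesis
  proof (cases st)
    case Nil
    then show ?thesis using inv s by simp
  next
    case (Cons S st')
    note head = np_inv_head[OF inv[unfolded s Cons]]
    show ?thesis
    proof (cases rule: np_step_cases[OF head(2) M_pos head(3,4), of c W out, case_names stay split])
      case stay
      then show ?thesis using inv unfolding s Cons np_inv_def by (simp add: blocks_def)
    next
      case (split A B)
      have "ordered_partition (map (\<lambda>i. {i}) out @ S # st') {1..K}"
        using inv by (simp add: s Cons np_inv_def blocks_def)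
      then have "ordered_partition (map (\<lambda>i. {i}) out @ A # B # st') {1..K}"
        using ordered_partition_split[OF split(3)] split(4-6) by blast
      then show ?thesis using split(1,8) unfolding s Cons np_inv_def by simp
    qed
  qed
qed

definition np_init :: np_state where
  "np_init = (\<lambda>_. 0, [{1..K}], [])"

lemma np_norm_init: "np_norm (\<lambda>_. 0, [{1..K}], []) = np_init"
  using K by (simp add: np_init_def)

lemma np_inv_init: "np_inv np_init"
  using K by (auto simp: np_inv_def np_init_def blocks_def ordered_partition_def disjoint_family_on_def)

section \<open>The ranking potential\<close>

definition rank_item :: "nat \<Rightarrow> nat" where
  "rank_item k = inv_into {1..K} \<sigma> k"

lemma rank_item:
  assumes "k \<in> {1..K}"
  shows "rank_item k \<in> {1..K}" "\<sigma> (rank_item k) = k"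
proof -
  have bij: "bij_betw \<sigma> {1..K} {1..K}" using ranking unfolding is_ranking_def by blast
  then have "k \<in> \<sigma> ` {1..K}" using assms by (simp add: bij_betw_def)
  then show "rank_item k \<in> {1..K}" unfolding rank_item_def by (rule inv_into_into)
  show "\<sigma> (rank_item k) = k" unfolding rank_item_def using bij assms by (rule bij_betw_inv_into_right)
qed

lemma adjacent_rank_items:
  assumes "k \<in> {1..<K}"
  shows "rank_item k \<noteq> rank_item (Suc k)" "\<sigma> (rank_item k) < \<sigma> (rank_item (Suc k))"
proof -
  have "k \<in> {1..K}" "Suc k \<in> {1..K}" using assms by auto
  then show "\<sigma> (rank_item k) < \<sigma> (rank_item (Suc k))" using rank_item(2) by simp
  then show "rank_item k \<noteq> rank_item (Suc k)" by auto
qed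

definition pair_potential :: "np_state \<Rightarrow> nat \<Rightarrow> nat \<Rightarrow> real" where
  "pair_potential s a b =
     (if same_block (blocks s) a b then p powr (M - (real (fst s b) - real (fst s a)))
      else if block_before (blocks s) b a then 1 else 0)"

definition potential :: "np_state \<Rightarrow> real" where
  "potential s = (\<Sum>k\<in>{1..<K}. pair_potential s (rank_item k) (rank_item (Suc k)))"

lemma pair_potential_nonneg: "0 \<le> pair_potential s a b"
  by (simp add: pair_potential_def)

lemma potential_nonneg: "0 \<le> potential s"
  unfolding potential_def by (intro sum_nonneg pair_potential_nonneg)

lemma pair_potential_step_outside:
  assumes inv: "np_inv (W, S # st, out)" and ab: "\<not> (a \<in> S \<and> b \<in> S)" and x: "x \<in> S"
  shows "pair_potential (np_step M (\<lambda>_. x) (W, S # st, out)) a b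
    = pair_potential (W, S # st, out) a b"
proof -
  let ?P = "map (\<lambda>i. {i}) out"
  note head = np_inv_head[OF inv]
  have "disjoint_family_on ((!) (?P @ S # st)) {..<length (?P @ S # st)}"
    using inv by (simp add: np_inv_def ordered_partition_def blocks_def)
  from same_block_outside[OF this, of "length out"]
  have scores: "(W(x := Suc (W x))) a = W a \<and> (W(x := Suc (W x))) b = W b"
    if "same_block (?P @ S # st) a b"
    using that ab x by (auto simp: nth_append)
  show ?thesis
  proof (cases rule: np_step_cases[OF head(2) M_pos head(3,4), of "\<lambda>_. x" W out, case_names stay split])
    case stay
    then show ?thesis using scores by (simp add: pair_potential_def blocks_def)
  next
    case (split A B)
    have "\<not> (b \<in> S \<and> a \<in> S)" using ab by blast
    with split scores same_block_split[OF split(3) ab] block_before_split[OF split(3)]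
    show ?thesis by (simp add: pair_potential_def blocks_def)
  qed
qed

lemma pair_potential_split_le:
  assumes blocks: "blocks s = P @ A # B # T"
    and disj: "disjoint_family_on ((!) (blocks s)) {..<length (blocks s)}"
    and ab: "a \<in> A \<union> B" "b \<in> A \<union> B"
    and gap: "\<forall>i\<in>A. \<forall>j\<in>B. real (fst s j) + M \<le> real (fst s i)"
  shows "pair_potential s a b \<le> p powr (M - (real (fst s b) - real (fst s a)))"
proof -
  from ab consider "a \<in> A" "b \<in> A" | "a \<in> B" "b \<in> B" | "a \<in> A" "b \<in> B" | "a \<in> B" "b \<in> A"
    by blast
  then show ?thesis
  proof cases
    case 1
    then have "same_block (blocks s) a b" unfolding blocks by (intro same_block_split_half(1)[OF refl])
    then show ?thesis by (simp add: pair_potential_def)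
  next
    case 2
    then have "same_block (blocks s) a b" unfolding blocks by (intro same_block_split_half(2)[OF refl])
    then show ?thesis by (simp add: pair_potential_def)
  next
    case 3
    then have "block_before (blocks s) a b" unfolding blocks by (intro block_before_split_halves[OF refl])
    then show ?thesis using block_before_exclusive[OF disj] by (simp add: pair_potential_def)
  next
    case 4
    then have "block_before (blocks s) b a" unfolding blocks by (intro block_before_split_halves[OF refl])
    moreover from block_before_exclusive(2)[OF disj this]
    have "\<not> same_block (blocks s) a b" by (simp add: same_block_commute)
    ultimately have "pair_potential s a b = 1" by (simp add: pair_potential_def)
    moreover have "real (fst s a) + M \<le> real (fst s b)" using gap 4 by blast
    then have "1 \<le> p powr (M - (real (fst s b) - real (fst s a)))"
      using powr_mono'[of "M - (real (fst s b) - real (fst s a))" 0 p] p_pos p_less_1 by simp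
    ultimately show ?thesis by simp
  qed
qed

lemma pair_potential_step_inside:
  assumes inv: "np_inv (W, S # st, out)" and ab: "a \<in> S" "b \<in> S" "a \<noteq> b" and x: "x \<in> S"
  shows "pair_potential (np_step M (\<lambda>_. x) (W, S # st, out)) a b
    \<le> pair_potential (W, S # st, out) a b * (if x = b then inverse p else if x = a then p else 1)"
proof -
  let ?W' = "W(x := Suc (W x))"
  note head = np_inv_head[OF inv]
  have same: "same_block (map (\<lambda>i. {i}) out @ S # st) a b" using ab(1,2) by (rule same_block_head)
  have "pair_potential (W, S # st, out) a b * (if x = b then inverse p else if x = a then p else 1)
      = p powr (M - (real (?W' b) - real (?W' a)))"
    using same powr_score_gap_step[OF p_pos ab(3), of M W x] by (simp add: pair_potential_def blocks_def)
  moreover have "pair_potential (np_step M (\<lambda>_. x) (W, S # st, out)) a b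
      \<le> p powr (M - (real (?W' b) - real (?W' a)))"
  proof (cases rule: np_step_cases[OF head(2) M_pos head(3,4), of "\<lambda>_. x" W out, case_names stay split])
    case stay
    then show ?thesis using same by (simp add: pair_potential_def blocks_def)
  next
    case (split A B)
    have "np_inv (np_step M (\<lambda>_. x) (W, S # st, out))" using inv by (rule np_inv_step)
    then have "disjoint_family_on ((!) (blocks (np_step M (\<lambda>_. x) (W, S # st, out))))
        {..<length (blocks (np_step M (\<lambda>_. x) (W, S # st, out)))}"
      by (simp add: np_inv_def ordered_partition_def)
    from pair_potential_split_le[OF split(1) this] split(2,3,7) ab(1,2) show ?thesis by simp
  qed
  ultimately show ?thesis by simp
qed

lemma pair_potential_step:
  assumes inv: "np_inv (W, S # st, out)" and "a \<noteq> b"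
    and ranked: "a \<in> S \<Longrightarrow> b \<in> S \<Longrightarrow> f b S \<le> p * f a S"
  shows "(\<Sum>x\<in>S. f x S * pair_potential (np_step M (\<lambda>_. x) (W, S # st, out)) a b)
    \<le> pair_potential (W, S # st, out) a b"
proof -
  let ?\<phi> = "pair_potential (W, S # st, out) a b"
  note head = np_inv_head[OF inv]
  have f_nonneg: "0 \<le> f x S" if "x \<in> S" for x
    using choice_prob_pos[OF head(1) that] by simp
  show ?thesis
  proof (cases "a \<in> S \<and> b \<in> S")
    case True
    let ?g = "\<lambda>x. if x = b then inverse p else if x = a then p else 1"
    have "(\<Sum>x\<in>S. f x S * pair_potential (np_step M (\<lambda>_. x) (W, S # st, out)) a b)
        \<le> (\<Sum>x\<in>S. f x S * (?\<phi> * ?g x))"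
      using pair_potential_step_inside[OF inv _ _ \<open>a \<noteq> b\<close>] True f_nonneg
      by (intro sum_mono mult_left_mono) auto
    also have "\<dots> = ?\<phi> * (\<Sum>x\<in>S. f x S * ?g x)"
      by (simp add: sum_distrib_left algebra_simps)
    also have "\<dots> \<le> ?\<phi> * 1"
      using True \<open>a \<noteq> b\<close> head(2) choice_prob_sum[OF head(1)] ranked p_pos p_less_1
      by (intro mult_left_mono sum_tilt_le_one pair_potential_nonneg) auto
    finally show ?thesis by simp
  next
    case False
    then show ?thesis
      using pair_potential_step_outside[OF inv] choice_prob_sum[OF head(1)]
      by (simp add: sum_distrib_right[symmetric])
  qed
qed

lemma potential_step:
  assumes inv: "np_inv (W, S # st, out)"
  shows "(\<Sum>x\<in>S. f x S * potential (np_step M (\<lambda>_. x) (W, S # st, out))) \<le> potential (W, S # st, out)"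
proof -
  have "(\<Sum>x\<in>S. f x S * potential (np_step M (\<lambda>_. x) (W, S # st, out)))
      = (\<Sum>k\<in>{1..<K}. \<Sum>x\<in>S. f x S *
           pair_potential (np_step M (\<lambda>_. x) (W, S # st, out)) (rank_item k) (rank_item (Suc k)))"
    unfolding potential_def sum_distrib_left by (rule sum.swap)
  also have "\<dots> \<le> potential (W, S # st, out)"
    unfolding potential_def
    using adjacent_rank_items choice_prob_ranked np_inv_head(1)[OF inv]
    by (intro sum_mono pair_potential_step[OF inv]) auto
  finally show ?thesis .
qed

lemma potential_init: "potential np_init = real (K - 1) * p powr M"
proof -
  have "pair_potential np_init (rank_item k) (rank_item (Suc k)) = p powr M" if "k \<in> {1..<K}" for k
  proof -
    have "k \<in> {1..K}" "Suc k \<in> {1..K}" using that by auto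
    then have "same_block [{1..K}] (rank_item k) (rank_item (Suc k))"
      using rank_item(1) same_block_head[of _ "{1..K}" _ "[]" "[]"] by simp
    then show ?thesis by (simp add: pair_potential_def np_init_def blocks_def)
  qed
  then show ?thesis unfolding potential_def by simp
qed

lemma ranked_if_adjacent_ranks_ordered:
  assumes dist: "distinct out" and set_out: "set out = {1..K}"
    and ordered: "\<And>k u v. k \<in> {1..<K} \<Longrightarrow> out ! u = rank_item k \<Longrightarrow> out ! v = rank_item (Suc k)
      \<Longrightarrow> u < K \<Longrightarrow> v < K \<Longrightarrow> u < v"
  shows "\<forall>j<K. \<sigma> (out ! j) = Suc j"
proof -
  have len: "length out = K" using distinct_card[OF dist] set_out by simp
  define q where "q k = (SOME u. u < K \<and> out ! u = rank_item k)" for k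
  have q: "q k < K \<and> out ! q k = rank_item k" if "k \<in> {1..K}" for k
  proof -
    have "rank_item k \<in> set out" using rank_item(1)[OF that] set_out by simp
    then have "\<exists>u. u < K \<and> out ! u = rank_item k" using len by (auto simp: in_set_conv_nth)
    then show ?thesis unfolding q_def by (rule someI_ex)
  qed
  have q_eq: "q k = k - 1" if "1 \<le> k" "k \<le> K" for k
  proof (rule strict_mono_bounded_eq_pred[of K q])
    show "q k < q (Suc k)" if "1 \<le> k" "k < K" for k
      using ordered[of k "q k" "q (Suc k)"] q[of k] q[of "Suc k"] that by auto
    show "q k < K" if "1 \<le> k" "k \<le> K" for k
      using q[of k] that by auto
  qed (use that in auto)
  show ?thesis
  proof (intro allI impI)
    fix j assume "j < K"
    then have j: "Suc j \<in> {1..K}" by auto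
    have "out ! j = rank_item (Suc j)" using q[OF j] q_eq[of "Suc j"] j by auto
    then show "\<sigma> (out ! j) = Suc j" using rank_item(2)[OF j] by simp
  qed
qed

lemma potential_terminal:
  assumes inv: "np_inv (W, [], out)"
    and wrong: "\<not> (length out = K \<and> (\<forall>j<K. \<sigma> (out ! j) = Suc j))"
  shows "1 \<le> potential (W, [], out)"
proof -
  have part: "ordered_partition (map (\<lambda>i. {i}) out) {1..K}"
    using inv by (simp add: np_inv_def blocks_def)
  have dist: "distinct out"
    using part unfolding ordered_partition_def disjoint_family_on_def distinct_conv_nth by auto
  have set_out: "set out = {1..K}" using part unfolding ordered_partition_def by auto
  with dist wrong have "\<not> (\<forall>j<K. \<sigma> (out ! j) = Suc j)" using distinct_card by fastforce
  then obtain k u v where k: "k \<in> {1..<K}" and uv: "out ! u = rank_item k" "out ! v = rank_item (Suc k)"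
    "u < K" "v < K" "\<not> u < v"
    using ranked_if_adjacent_ranks_ordered[OF dist set_out] by blast
  have "u \<noteq> v" using uv adjacent_rank_items(1)[OF k] by auto
  with uv have "v < u" by simp
  moreover have "u < length out" using uv(3) distinct_card[OF dist] set_out by simp
  ultimately have "block_before (blocks (W, [], out)) (rank_item (Suc k)) (rank_item k)"
    using block_before_singletons[of v u out] uv(1,2) by (simp add: blocks_def)
  moreover have "\<not> same_block (blocks (W, [], out)) (rank_item k) (rank_item (Suc k))"
    using adjacent_rank_items(1)[OF k] by (auto simp: blocks_def same_block_def)
  ultimately have "pair_potential (W, [], out) (rank_item k) (rank_item (Suc k)) = 1"
    by (simp add: pair_potential_def)
  moreover have "pair_potential (W, [], out) (rank_item k) (rank_item (Suc k)) \<le> potential (W, [], out)"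
    unfolding potential_def using k by (intro member_le_sum pair_potential_nonneg) auto
  ultimately show ?thesis by simp
qed

section \<open>Expectations along runs\<close>

lemma np_inv_run_from: "np_inv s \<Longrightarrow> np_inv (run_from M s \<omega> n)"
  by (induction n arbitrary: s \<omega>) (simp_all add: np_inv_step)

lemma run_from_cong:
  assumes "np_inv s" "\<forall>k<n. \<forall>S\<subseteq>{1..K}. \<omega> k S = \<omega>' k S"
  shows "run_from M s \<omega> n = run_from M s \<omega>' n"
  using assms
proof (induction n arbitrary: s \<omega> \<omega>')
  case (Suc n)
  have "np_step M (\<omega> 0) s = np_step M (\<omega>' 0) s"
  proof (cases s)
    case (fields W st out)
    show ?thesis
    proof (cases st)
      case (Cons S st')
      have "S \<subseteq> {1..K}" using np_inv_head(1) Suc.prems(1) fields Cons by (simp add: setsK_def)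
      then have "\<omega> 0 S = \<omega>' 0 S" using Suc.prems(2) by simp
      then show ?thesis
        using fields Cons np_step_head_choice[of M "\<omega> 0"] np_step_head_choice[of M "\<omega>' 0"] by metis
    qed (simp add: fields)
  qed
  moreover have "run_from M (np_step M (\<omega>' 0) s) (\<lambda>k. \<omega> (Suc k)) n
      = run_from M (np_step M (\<omega>' 0) s) (\<lambda>k. \<omega>' (Suc k)) n"
    using Suc.prems by (intro Suc.IH np_inv_step) auto
  ultimately show ?case by simp
qed simp

abbreviation choice_law :: "(nat set \<Rightarrow> nat) pmf" where
  "choice_law \<equiv> choice_fun_pmf K f"

abbreviation \<Omega> :: "(nat \<Rightarrow> nat set \<Rightarrow> nat) measure" where
  "\<Omega> \<equiv> Omega K f"

lemma prob_space_\<Omega>: "prob_space \<Omega>"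
  unfolding Omega_def by (intro prob_space_PiM prob_space_measure_pmf)

lemma measurable_choice: "(\<lambda>\<omega>. \<omega> k S) \<in> measurable \<Omega> (count_space UNIV)"
proof -
  have "(\<lambda>\<omega>. \<omega> k) \<in> measurable \<Omega> (measure_pmf choice_law)"
    unfolding Omega_def by (rule measurable_component_singleton) simp
  then show ?thesis by (rule measurable_compose) simp
qed

text \<open>
  The state after \<open>n\<close> steps depends only on the finitely many choices \<open>\<omega> k S\<close> with \<open>k < n\<close> and
  \<open>S \<subseteq> {1..K}\<close>, i.e. it factors through a map into a countable space.
\<close>

lemma measurable_run_from:
  assumes "np_inv s"
  shows "(\<lambda>\<omega>. run_from M s \<omega> n) \<in> measurable \<Omega> (count_space UNIV)"
proof -
  define D where "D = {..<n} \<times> Pow {1..K}"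
  define I where "I = PiE D (\<lambda>_. UNIV :: nat set)"
  have finD: "finite D" unfolding D_def by simp
  have cI: "countable I" unfolding I_def by (intro countable_PiE finD) simp
  define g where "g \<omega> = restrict (\<lambda>(k, S). \<omega> k S) D" for \<omega> :: "nat \<Rightarrow> nat set \<Rightarrow> nat"
  have g: "g \<in> measurable \<Omega> (count_space I)"
  proof (subst measurable_count_space_eq_countable[OF cI], intro conjI ballI)
    show "g \<in> space \<Omega> \<rightarrow> I" unfolding g_def I_def by simp
    fix d assume d: "d \<in> I"
    have "g -` {d} \<inter> space \<Omega> = (\<Inter>x\<in>D. {\<omega> \<in> space \<Omega>. \<omega> (fst x) (snd x) = d x}) \<inter> space \<Omega>"
      using d unfolding g_def I_def
      by (auto simp: restrict_def PiE_def extensional_def fun_eq_iff split: prod.splits)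
        (metis fst_conv snd_conv)
    also have "\<dots> \<in> sets \<Omega>"
    proof -
      have "{\<omega> \<in> space \<Omega>. \<omega> (fst x) (snd x) = d x} \<in> sets \<Omega>" for x
      proof -
        have "(\<lambda>\<omega>. \<omega> (fst x) (snd x)) -` {d x} \<inter> space \<Omega> \<in> sets \<Omega>"
          using measurable_choice by (rule measurable_sets) simp
        then show ?thesis by (simp add: vimage_def Int_def conj_commute)
      qed
      then show ?thesis by (cases "D = {}") (auto intro!: sets.Int sets.finite_INT finD)
    qed
    finally show "g -` {d} \<inter> space \<Omega> \<in> sets \<Omega>" .
  qed
  have "(\<lambda>\<omega>. (\<lambda>d. \<lambda>_. run_from M s (\<lambda>k S. d (k, S)) n) (g \<omega>) \<omega>) \<in> measurable \<Omega> (count_space UNIV)"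
    by (rule measurable_compose_countable'[OF _ g cI]) simp
  moreover have "run_from M s \<omega> n = run_from M s (\<lambda>k S. g \<omega> (k, S)) n" for \<omega>
    using assms by (intro run_from_cong) (auto simp: g_def D_def)
  ultimately show ?thesis by simp
qed

lemma borel_measurable_run_from:
  assumes "np_inv s"
  shows "(\<lambda>\<omega>. g (run_from M s \<omega> n)) \<in> borel_measurable \<Omega>"
  using measurable_run_from[OF assms] by (rule measurable_compose) simp

definition expect_after :: "nat \<Rightarrow> (np_state \<Rightarrow> ennreal) \<Rightarrow> np_state \<Rightarrow> ennreal" where
  "expect_after n g s = (\<integral>\<^sup>+\<omega>. g (run_from M s \<omega> n) \<partial>\<Omega>)"

lemma expect_after_const: "expect_after n (\<lambda>_. c) s = c"
proof -
  interpret prob_space \<Omega> by (rule prob_space_\<Omega>)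
  show ?thesis unfolding expect_after_def by (simp add: emeasure_space_1)
qed

lemma expect_after_0: "expect_after 0 g s = g s"
  using expect_after_const[of 0 "g s" s] by (simp add: expect_after_def)

lemma expect_after_Suc:
  assumes "np_inv s"
  shows "expect_after (Suc n) g s = (\<integral>\<^sup>+c. expect_after n g (np_step M c s) \<partial>choice_law)"
proof -
  interpret S: sequence_space "measure_pmf choice_law"
    by (simp add: sequence_space_def product_prob_space_def product_prob_space_axioms_def
        product_sigma_finite_def prob_space_imp_sigma_finite prob_space_measure_pmf)
  have \<Omega>: "\<Omega> = S.S" by (simp add: Omega_def)
  define G where "G \<omega> = g (run_from M s \<omega> (Suc n))" for \<omega>
  have G: "G \<in> borel_measurable S.S"
    unfolding G_def \<Omega>[symmetric] using assms by (rule borel_measurable_run_from)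
  have cons: "(\<lambda>(c, \<omega>). case_nat c \<omega>) \<in> measurable (measure_pmf choice_law \<Otimes>\<^sub>M S.S) S.S"
    by measurable
  have "expect_after (Suc n) g s = (\<integral>\<^sup>+\<omega>. G \<omega> \<partial>S.S)"
    unfolding expect_after_def G_def \<Omega> ..
  also have "\<dots> = (\<integral>\<^sup>+\<omega>. G \<omega> \<partial>distr (measure_pmf choice_law \<Otimes>\<^sub>M S.S) S.S (\<lambda>(c, \<omega>). case_nat c \<omega>))"
    by (simp add: S.PiM_iter)
  also have "\<dots> = (\<integral>\<^sup>+x. G (case_prod case_nat x) \<partial>(measure_pmf choice_law \<Otimes>\<^sub>M S.S))"
    using G cons by (subst nn_integral_distr) auto
  also have "\<dots> = (\<integral>\<^sup>+c. \<integral>\<^sup>+\<omega>. G (case_nat c \<omega>) \<partial>S.S \<partial>choice_law)"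
    using measurable_compose[OF cons G]
    by (subst S.nn_integral_fst[symmetric]) (auto simp: case_prod_unfold)
  also have "\<dots> = (\<integral>\<^sup>+c. expect_after n g (np_step M c s) \<partial>choice_law)"
    unfolding expect_after_def G_def \<Omega> by simp
  finally show ?thesis .
qed

lemma expect_after_add_steps:
  "np_inv s \<Longrightarrow> expect_after (a + b) g s = expect_after a (expect_after b g) s"
proof (induction a arbitrary: s)
  case (Suc a)
  then show ?case
    by (simp add: expect_after_Suc np_inv_step cong: nn_integral_cong)
qed (simp add: expect_after_0)

lemma expect_after_mono:
  "(\<And>\<omega>. g1 (run_from M s \<omega> n) \<le> g2 (run_from M s \<omega> n)) \<Longrightarrow> expect_after n g1 s \<le> expect_after n g2 s"
  unfolding expect_after_def by (intro nn_integral_mono) auto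

lemma expect_after_cmult:
  "np_inv s \<Longrightarrow> expect_after n (\<lambda>s'. c * g s') s = c * expect_after n g s"
  unfolding expect_after_def by (intro nn_integral_cmult borel_measurable_run_from)

lemma expect_after_add:
  "np_inv s \<Longrightarrow> expect_after n (\<lambda>s'. g1 s' + g2 s') s = expect_after n g1 s + expect_after n g2 s"
  unfolding expect_after_def by (intro nn_integral_add borel_measurable_run_from)

lemma choice_law_component: "S \<in> setsK K \<Longrightarrow> map_pmf (\<lambda>c. c S) choice_law = choice_pmf K f S"
  unfolding choice_fun_pmf_def by (subst Pi_pmf_component) (auto simp: setsK_def)

lemma pmf_choice_pmf:
  assumes S: "S \<in> setsK K"
  shows "pmf (choice_pmf K f S) x = (if x \<in> S then f x S else 0)"
proof -
  have fin: "finite S" using S unfolding setsK_def by (auto intro: finite_subset)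
  have nonneg: "0 \<le> (if x \<in> S then f x S else 0)" for x
    using choice_prob_pos[OF S] by (auto intro: less_imp_le)
  have "(\<integral>\<^sup>+x. ennreal (if x \<in> S then f x S else 0) \<partial>count_space UNIV)
      = (\<integral>\<^sup>+x. ennreal (f x S) * indicator S x \<partial>count_space UNIV)"
    by (intro nn_integral_cong) (auto split: split_indicator)
  also have "\<dots> = ennreal (\<Sum>x\<in>S. f x S)"
    using fin choice_prob_pos[OF S]
    by (simp add: nn_integral_indicator_finite less_imp_le)
  also have "\<dots> = 1" using choice_prob_sum[OF S] by simp
  finally show ?thesis
    using S unfolding choice_pmf_def by (simp add: pmf_embed_pmf[OF nonneg])
qed

lemma nn_integral_np_step_head:
  assumes inv: "np_inv (W, S # st, out)"
  shows "(\<integral>\<^sup>+c. h (np_step M c (W, S # st, out)) \<partial>choice_law)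
       = (\<Sum>x\<in>S. h (np_step M (\<lambda>_. x) (W, S # st, out)) * ennreal (f x S))"
proof -
  note head = np_inv_head[OF inv]
  have "(\<integral>\<^sup>+c. h (np_step M c (W, S # st, out)) \<partial>choice_law)
      = (\<integral>\<^sup>+x. h (np_step M (\<lambda>_. x) (W, S # st, out)) \<partial>map_pmf (\<lambda>c. c S) choice_law)"
    unfolding nn_integral_map_pmf
    by (intro nn_integral_cong arg_cong[where f=h] np_step_head_choice)
  also have "\<dots> = (\<integral>\<^sup>+x. h (np_step M (\<lambda>_. x) (W, S # st, out)) \<partial>choice_pmf K f S)"
    by (simp only: choice_law_component[OF head(1)])
  also have "\<dots> = (\<Sum>x\<in>S. h (np_step M (\<lambda>_. x) (W, S # st, out)) * pmf (choice_pmf K f S) x)"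
    using head(2) by (intro nn_integral_measure_pmf_support)
      (auto simp: set_pmf_eq pmf_choice_pmf[OF head(1)])
  also have "\<dots> = (\<Sum>x\<in>S. h (np_step M (\<lambda>_. x) (W, S # st, out)) * ennreal (f x S))"
    by (simp add: pmf_choice_pmf[OF head(1)])
  finally show ?thesis .
qed

lemma expect_after_Suc_head_ge:
  assumes inv: "np_inv (W, S # st, out)" and y: "y \<in> S"
  shows "expect_after n g (np_step M (\<lambda>_. y) (W, S # st, out)) * ennreal (f y S)
    \<le> expect_after (Suc n) g (W, S # st, out)"
  unfolding expect_after_Suc[OF inv] nn_integral_np_step_head[OF inv]
  using y np_inv_head(2)[OF inv] by (intro member_le_sum) auto

lemma potential_supermartingale:
  "np_inv s \<Longrightarrow> expect_after n (\<lambda>s'. ennreal (potential s')) s \<le> ennreal (potential s)"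
proof (induction n arbitrary: s)
  case (Suc n)
  have "expect_after (Suc n) (\<lambda>s'. ennreal (potential s')) s
      \<le> (\<integral>\<^sup>+c. ennreal (potential (np_step M c s)) \<partial>choice_law)"
    unfolding expect_after_Suc[OF Suc.prems]
    by (intro nn_integral_mono Suc.IH np_inv_step Suc.prems)
  also have "\<dots> \<le> ennreal (potential s)"
  proof (cases s)
    case (fields W st out)
    show ?thesis
    proof (cases st)
      case (Cons S st')
      have inv: "np_inv (W, S # st', out)" using Suc.prems fields Cons by simp
      have "(\<integral>\<^sup>+c. ennreal (potential (np_step M c s)) \<partial>choice_law)
          = (\<Sum>x\<in>S. ennreal (potential (np_step M (\<lambda>_. x) (W, S # st', out))) * ennreal (f x S))"
        unfolding fields Cons by (rule nn_integral_np_step_head[OF inv])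
      also have "\<dots> = ennreal (\<Sum>x\<in>S. f x S * potential (np_step M (\<lambda>_. x) (W, S # st', out)))"
        using choice_prob_pos[OF np_inv_head(1)[OF inv]] potential_nonneg
        by (subst sum_ennreal[symmetric])
          (auto simp: ennreal_mult'' mult.commute less_imp_le intro!: sum.cong)
      also have "\<dots> \<le> ennreal (potential s)"
        unfolding fields Cons by (intro ennreal_leI potential_step[OF inv])
      finally show ?thesis .
    qed (simp add: fields measure_pmf.emeasure_space_1)
  qed
  finally show ?case .
qed (simp add: expect_after_0)

section \<open>Termination\<close>

definition num_blocks :: "np_state \<Rightarrow> nat" where
  "num_blocks s = length (blocks s)"

lemma num_blocks_step:
  assumes inv: "np_inv (W, S # st, out)"
  obtains (stay) "np_step M c (W, S # st, out) = (W(c S := Suc (W (c S))), S # st, out)"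
      "\<forall>y\<in>S. \<not> leads_by M (W(c S := Suc (W (c S)))) S y"
  | (split) "num_blocks (np_step M c (W, S # st, out)) = Suc (num_blocks (W, S # st, out))"
proof -
  note head = np_inv_head[OF inv]
  show thesis
  proof (cases rule: np_step_cases[OF head(2) M_pos head(3,4), of c W out, case_names stay split])
    case stay
    then show thesis by (rule that(1))
  next
    case (split A B)
    then show thesis by (intro that(2)) (simp add: num_blocks_def blocks_def)
  qed
qed

lemma num_blocks_run_from_mono: "np_inv s \<Longrightarrow> num_blocks s \<le> num_blocks (run_from M s \<omega> n)"
proof (induction n arbitrary: s \<omega>)
  case (Suc n)
  have "num_blocks s \<le> num_blocks (np_step M (\<omega> 0) s)"
  proof (cases s)
    case (fields W st out)
    show ?thesis
    proof (cases st)
      case (Cons S st')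
      show ?thesis unfolding fields Cons
        by (rule num_blocks_step[OF Suc.prems[unfolded fields Cons], of "\<omega> 0"])
          (simp_all add: num_blocks_def blocks_def)
    qed (simp add: fields)
  qed
  also have "\<dots> \<le> num_blocks (run_from M s \<omega> (Suc n))"
    using Suc.IH[OF np_inv_step[OF Suc.prems]] by simp
  finally show ?case .
qed simp

lemma num_blocks_le:
  assumes inv: "np_inv s"
  shows "num_blocks s \<le> K" and "fst (snd s) \<noteq> [] \<Longrightarrow> num_blocks s < K"
proof -
  have part: "ordered_partition (blocks s) {1..K}" using inv by (simp add: np_inv_def)
  then show "num_blocks s \<le> K" using ordered_partition_length(1)[OF part] by (simp add: num_blocks_def)
  assume "fst (snd s) \<noteq> []"
  then obtain W S st out where s: "s = (W, S # st, out)" by (metis list.exhaust prod.collapse)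
  have "blocks s ! length out = S" "length out < length (blocks s)"
    by (simp_all add: s blocks_def nth_append)
  then show "num_blocks s < K"
    using ordered_partition_length(2)[OF part] np_inv_head(3)[OF inv[unfolded s]]
    by (simp add: num_blocks_def)
qed

definition min_choice_prob :: real where
  "min_choice_prob = Min ((\<lambda>(S, i). f i S) ` (SIGMA S:setsK K. S))"

lemma min_choice_prob: "0 < min_choice_prob" "min_choice_prob \<le> 1"
  and min_choice_prob_le: "S \<in> setsK K \<Longrightarrow> i \<in> S \<Longrightarrow> min_choice_prob \<le> f i S"
proof -
  have "finite (setsK K)"
    unfolding setsK_def by (rule finite_subset[of _ "Pow {1..K}"]) auto
  then have fin: "finite (SIGMA S:setsK K. S)"
    by (rule finite_SigmaI) (auto simp: setsK_def intro: finite_subset)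
  show le: "min_choice_prob \<le> f i S" if "S \<in> setsK K" "i \<in> S" for S i
    unfolding min_choice_prob_def using fin that by (intro Min_le) force+
  have all: "{1..K} \<in> setsK K" using K by (simp add: setsK_def)
  then have "({1..K}, 1) \<in> (SIGMA S:setsK K. S)" using K by auto
  then have "(SIGMA S:setsK K. S) \<noteq> {}" by blast
  then show "0 < min_choice_prob" unfolding min_choice_prob_def using fin
    by (subst Min_gr_iff) (auto intro: choice_prob_pos)
  have "f 1 {1..K} \<le> (\<Sum>i\<in>{1..K}. f i {1..K})"
    using choice_prob_pos[OF all] K by (intro member_le_sum) (auto intro: less_imp_le)
  then show "min_choice_prob \<le> 1" using le[OF all, of 1] choice_prob_sum[OF all] K by simp
qed

definition gap_steps :: nat where
  "gap_steps = nat \<lceil>M\<rceil>"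

lemma gap_steps: "M \<le> real gap_steps" "1 \<le> gap_steps"
  using M_pos by (simp_all add: gap_steps_def real_nat_ceiling_ge) linarith

definition blocks_grew :: "nat \<Rightarrow> np_state \<Rightarrow> ennreal" where
  "blocks_grew N s = (if N < num_blocks s then 1 else 0)"

lemma expect_after_blocks_grew:
  assumes "np_inv s" "N < num_blocks s"
  shows "expect_after n (blocks_grew N) s = 1"
proof -
  have "expect_after n (blocks_grew N) s = expect_after n (\<lambda>_. 1) s"
    unfolding expect_after_def using num_blocks_run_from_mono[OF assms(1)] assms(2)
    by (intro nn_integral_cong) (auto simp: blocks_grew_def intro: less_le_trans)
  then show ?thesis by (simp add: expect_after_const)
qed

text \<open>
  If \<open>y\<close> is chosen again and again, its lead over the rest of \<open>S\<close> grows by one per step, so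
  \<open>S\<close> is split within \<open>n + 1\<close> steps once \<open>y\<close> is at most \<open>n + 1\<close> short of a lead of
  \<open>gap_steps \<ge> M\<close>.
\<close>

lemma split_after_repeated_choice:
  assumes "np_inv (W, S # st, out)" "y \<in> S" "\<forall>z\<in>S - {y}. W z + gap_steps \<le> W y + Suc n"
  shows "ennreal (min_choice_prob ^ n)
    \<le> expect_after n (blocks_grew (num_blocks (W, S # st, out))) (np_step M (\<lambda>_. y) (W, S # st, out))"
  using assms
proof (induction n arbitrary: W rule: less_induct)
  case (less n W)
  let ?N = "num_blocks (W, S # st, out)" and ?W' = "W(y := Suc (W y))"
  note \<delta> = min_choice_prob
  show ?case
  proof (cases rule: num_blocks_step[OF less.prems(1), of "\<lambda>_. y", case_names stay split])
    case split
    with np_inv_step[OF less.prems(1)] expect_after_blocks_grew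
    have "expect_after n (blocks_grew ?N) (np_step M (\<lambda>_. y) (W, S # st, out)) = 1" by simp
    then show ?thesis using \<delta> by (simp add: power_le_one)
  next
    case stay
    have inv': "np_inv (?W', S # st, out)"
      using np_inv_step[OF less.prems(1), of "\<lambda>_. y"] stay(1) by simp
    show ?thesis
    proof (cases n)
      case 0
      have "leads_by M ?W' S y" unfolding leads_by_def
      proof
        fix z assume z: "z \<in> S - {y}"
        then have "W z + gap_steps \<le> W y + 1" using less.prems(3) 0 by auto
        then have "real (W z) + real gap_steps \<le> real (W y) + 1" by linarith
        then show "real (?W' z) + M \<le> real (?W' y)" using z gap_steps(1) by simp
      qed
      with stay(2) less.prems(2) show ?thesis by blast
    next
      case (Suc n')
      have N: "num_blocks (?W', S # st, out) = ?N" by (simp add: num_blocks_def blocks_def)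
      have "\<forall>z\<in>S - {y}. ?W' z + gap_steps \<le> ?W' y + Suc n'" using less.prems(3) Suc by auto
      moreover have "n' < n" using Suc by simp
      ultimately have "ennreal (min_choice_prob ^ n')
          \<le> expect_after n' (blocks_grew ?N) (np_step M (\<lambda>_. y) (?W', S # st, out))"
        using less.IH[OF _ inv' less.prems(2)] unfolding N by blast
      then have "ennreal (min_choice_prob ^ n') * ennreal (f y S)
          \<le> expect_after n' (blocks_grew ?N) (np_step M (\<lambda>_. y) (?W', S # st, out)) * ennreal (f y S)"
        by (rule mult_right_mono) simp
      also have "\<dots> \<le> expect_after n (blocks_grew ?N) (?W', S # st, out)"
        using expect_after_Suc_head_ge[OF inv' less.prems(2), of n' "blocks_grew ?N"] Suc by simp
      finally show ?thesis
        using ennreal_power_Suc_le_mult[OF less_imp_le[OF \<delta>(1)]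
            min_choice_prob_le[OF np_inv_head(1)[OF less.prems(1)] less.prems(2)], of n'] stay(1) Suc
        by simp
    qed
  qed
qed

lemma split_prob_lower_bound:
  assumes inv: "np_inv s" and pending: "fst (snd s) \<noteq> []"
  shows "ennreal (min_choice_prob ^ gap_steps)
    \<le> expect_after gap_steps (blocks_grew (num_blocks s)) s"
proof -
  obtain W S st out where s: "s = (W, S # st, out)"
    using pending by (metis list.exhaust prod.collapse)
  note head = np_inv_head[OF inv[unfolded s]]
  obtain y where y: "y \<in> S" "\<forall>z\<in>S. W z \<le> W y"
  proof -
    have "Max (W ` S) \<in> W ` S" using head(2,3) by (intro Max_in) auto
    moreover have "\<forall>z\<in>S. W z \<le> Max (W ` S)" using head(2) by simp
    ultimately show ?thesis using that by auto
  qed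
  have m: "gap_steps = Suc (gap_steps - 1)" using gap_steps(2) by simp
  have "ennreal (min_choice_prob ^ (gap_steps - 1))
      \<le> expect_after (gap_steps - 1) (blocks_grew (num_blocks s)) (np_step M (\<lambda>_. y) s)"
    using split_after_repeated_choice[OF inv[unfolded s] y(1), of "gap_steps - 1"] y(2) m
    unfolding s by auto
  then have "ennreal (min_choice_prob ^ (gap_steps - 1)) * ennreal (f y S)
      \<le> expect_after (gap_steps - 1) (blocks_grew (num_blocks s)) (np_step M (\<lambda>_. y) s) * ennreal (f y S)"
    by (rule mult_right_mono) simp
  also have "\<dots> \<le> expect_after gap_steps (blocks_grew (num_blocks s)) s"
    using expect_after_Suc_head_ge[OF inv[unfolded s] y(1)] m unfolding s by metis
  finally show ?thesis
    using ennreal_power_Suc_le_mult[OF less_imp_le[OF min_choice_prob(1)]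
        min_choice_prob_le[OF head(1) y(1)], of "gap_steps - 1"] m
    by simp
qed

section \<open>The error probability\<close>

definition unfinished_weight :: "np_state \<Rightarrow> ennreal" where
  "unfinished_weight s = (if fst (snd s) = [] then 0 else ennreal (2 ^ (K - num_blocks s)))"

definition decay :: real where
  "decay = 1 - min_choice_prob ^ gap_steps / 2"

lemma decay: "0 \<le> decay" "decay < 1"
proof -
  have "0 < min_choice_prob ^ gap_steps" "min_choice_prob ^ gap_steps \<le> 1"
    using min_choice_prob by (auto intro: power_le_one)
  then show "0 \<le> decay" "decay < 1" unfolding decay_def by auto
qed

lemma unfinished_weight_blocks_grew_le:
  assumes inv: "np_inv s" and N: "N \<le> num_blocks s" "N < K"
  shows "unfinished_weight s + ennreal (2 ^ (K - N) / 2) * blocks_grew N s \<le> ennreal (2 ^ (K - N))"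
proof (cases "N < num_blocks s")
  case True
  let ?c = "(2::real) ^ (K - N) / 2"
  have "(2::real) ^ (K - num_blocks s) \<le> 2 ^ (K - N - 1)"
    using True num_blocks_le(1)[OF inv] by (intro power_increasing) auto
  also have "\<dots> = ?c" using N(2) by (cases "K - N") auto
  finally have "unfinished_weight s \<le> ennreal ?c"
    by (auto simp: unfinished_weight_def intro: ennreal_leI)
  then have "unfinished_weight s + ennreal ?c * blocks_grew N s \<le> ennreal ?c + ennreal ?c"
    using True by (simp add: blocks_grew_def add_right_mono)
  also have "\<dots> = ennreal (2 ^ (K - N))" by (simp flip: ennreal_plus)
  finally show ?thesis .
next
  case False
  then show ?thesis using N(1) by (simp add: unfinished_weight_def blocks_grew_def)
qed

lemma unfinished_weight_contract:
  assumes inv: "np_inv s"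
  shows "expect_after gap_steps unfinished_weight s \<le> ennreal decay * unfinished_weight s"
proof (cases "fst (snd s) = []")
  case True
  then obtain W out where "s = (W, [], out)" by (metis prod.collapse)
  then show ?thesis by (simp add: expect_after_def run_from_terminated unfinished_weight_def)
next
  case False
  define N where "N = num_blocks s"
  define c where "c = (2::real) ^ (K - N) / 2"
  have N: "N < K" using num_blocks_le(2)[OF inv False] by (simp add: N_def)
  have "expect_after gap_steps unfinished_weight s
        + ennreal c * expect_after gap_steps (blocks_grew N) s
      = expect_after gap_steps (\<lambda>s'. unfinished_weight s' + ennreal c * blocks_grew N s') s"
    by (simp add: expect_after_add[OF inv] expect_after_cmult[OF inv])
  also have "\<dots> \<le> expect_after gap_steps (\<lambda>_. ennreal (2 ^ (K - N))) s"
    using unfinished_weight_blocks_grew_le[OF np_inv_run_from[OF inv] _ N] num_blocks_run_from_mono[OF inv]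
    by (intro expect_after_mono) (simp add: c_def N_def)
  also have "\<dots> = ennreal (2 ^ (K - N))" by (rule expect_after_const)
  finally have bound: "expect_after gap_steps unfinished_weight s
      + ennreal c * expect_after gap_steps (blocks_grew N) s \<le> ennreal (2 ^ (K - N))" .
  have "ennreal (c * min_choice_prob ^ gap_steps) = ennreal c * ennreal (min_choice_prob ^ gap_steps)"
    using min_choice_prob(1) by (intro ennreal_mult) (simp_all add: c_def)
  also have "\<dots> \<le> ennreal c * expect_after gap_steps (blocks_grew N) s"
    unfolding N_def by (intro mult_left_mono split_prob_lower_bound[OF inv False]) simp
  finally have "ennreal (c * min_choice_prob ^ gap_steps)
      \<le> ennreal c * expect_after gap_steps (blocks_grew N) s" .
  with bound have "expect_after gap_steps unfinished_weight s + ennreal (c * min_choice_prob ^ gap_steps)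
      \<le> ennreal (2 ^ (K - N))"
    by (meson add_left_mono order_trans)
  then have "expect_after gap_steps unfinished_weight s
      \<le> ennreal (2 ^ (K - N)) - ennreal (c * min_choice_prob ^ gap_steps)"
    by (simp add: ennreal_le_minus_iff)
  also have "\<dots> = ennreal (2 ^ (K - N) - c * min_choice_prob ^ gap_steps)"
    using min_choice_prob(1) by (intro ennreal_minus) (simp add: c_def)
  also have "2 ^ (K - N) - c * min_choice_prob ^ gap_steps = decay * 2 ^ (K - N)"
    by (simp add: decay_def c_def algebra_simps)
  also have "ennreal (decay * 2 ^ (K - N)) = ennreal decay * unfinished_weight s"
    using False decay(1) by (simp add: unfinished_weight_def N_def ennreal_mult)
  finally show ?thesis .
qed

lemma unfinished_weight_decay:
  "np_inv s \<Longrightarrow>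
    expect_after (j * gap_steps) unfinished_weight s \<le> ennreal (decay ^ j) * unfinished_weight s"
proof (induction j arbitrary: s)
  case (Suc j)
  have "expect_after (Suc j * gap_steps) unfinished_weight s
      = expect_after gap_steps (expect_after (j * gap_steps) unfinished_weight) s"
    using expect_after_add_steps[OF Suc.prems] by simp
  also have "\<dots> \<le> expect_after gap_steps (\<lambda>s'. ennreal (decay ^ j) * unfinished_weight s') s"
    by (intro expect_after_mono Suc.IH np_inv_run_from Suc.prems)
  also have "\<dots> = ennreal (decay ^ j) * expect_after gap_steps unfinished_weight s"
    by (rule expect_after_cmult[OF Suc.prems])
  also have "\<dots> \<le> ennreal (decay ^ j) * (ennreal decay * unfinished_weight s)"
    by (intro mult_left_mono unfinished_weight_contract Suc.prems) simp
  also have "\<dots> = ennreal (decay ^ Suc j) * unfinished_weight s"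
    using decay(1) by (simp add: ennreal_mult mult_ac)
  finally show ?case .
qed (simp add: expect_after_0)

definition finished_correctly :: "np_state \<Rightarrow> bool" where
  "finished_correctly s \<longleftrightarrow>
     fst (snd s) = [] \<and> length (snd (snd s)) = K \<and> (\<forall>j<K. \<sigma> (snd (snd s) ! j) = Suc j)"

lemma np_correct_iff: "np_correct K M \<sigma> \<omega> \<longleftrightarrow> (\<exists>t. finished_correctly (run_from M np_init \<omega> t))"
  unfolding np_correct_def finished_correctly_def Let_def np_run_eq_run_from np_norm_init by simp

lemma one_le_if_not_finished_correctly:
  assumes inv: "np_inv s" and "\<not> finished_correctly s"
  shows "1 \<le> ennreal (potential s) + unfinished_weight s"
proof -
  obtain W st out where s: "s = (W, st, out)" by (cases s)
  show ?thesis
  proof (cases st)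
    case Nil
    then have "1 \<le> potential s"
      using potential_terminal assms s by (simp add: finished_correctly_def)
    then show ?thesis by (simp add: ennreal_leI add_increasing2)
  next
    case Cons
    then have "1 \<le> unfinished_weight s" by (simp add: s unfinished_weight_def ennreal_leI)
    then show ?thesis by (simp add: add_increasing)
  qed
qed

lemma unfinished_weight_init: "unfinished_weight np_init = ennreal (2 ^ (K - 1))"
  by (simp add: unfinished_weight_def np_init_def num_blocks_def blocks_def)

lemma np_error_event:
  "{\<omega> \<in> space \<Omega>. \<not> np_correct K M \<sigma> \<omega>}
     = (\<Inter>t. {\<omega> \<in> space \<Omega>. \<not> finished_correctly (run_from M np_init \<omega> t)})"
  unfolding np_correct_iff by auto

lemma sets_not_finished_correctly:
  "{\<omega> \<in> space \<Omega>. \<not> finished_correctly (run_from M np_init \<omega> t)} \<in> sets \<Omega>"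
  using measurable_run_from[OF np_inv_init] by (rule measurable_sets_Collect) simp

lemma np_error_prob_le:
  "measure \<Omega> {\<omega> \<in> space \<Omega>. \<not> np_correct K M \<sigma> \<omega>} \<le> real (K - 1) * p powr M + decay ^ j * 2 ^ (K - 1)"
proof -
  interpret prob_space \<Omega> by (rule prob_space_\<Omega>)
  define t where "t = j * gap_steps"
  define B where "B = {\<omega> \<in> space \<Omega>. \<not> finished_correctly (run_from M np_init \<omega> t)}"
  have "emeasure \<Omega> {\<omega> \<in> space \<Omega>. \<not> np_correct K M \<sigma> \<omega>} \<le> emeasure \<Omega> B"
    unfolding np_error_event B_def by (intro emeasure_mono sets_not_finished_correctly) auto
  also have "\<dots> = (\<integral>\<^sup>+\<omega>. indicator B \<omega> \<partial>\<Omega>)"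
    using sets_not_finished_correctly unfolding B_def by simp
  also have "\<dots> \<le> (\<integral>\<^sup>+\<omega>. ennreal (potential (run_from M np_init \<omega> t))
      + unfinished_weight (run_from M np_init \<omega> t) \<partial>\<Omega>)"
    using one_le_if_not_finished_correctly[OF np_inv_run_from[OF np_inv_init]] unfolding B_def
    by (intro nn_integral_mono) (auto split: split_indicator)
  also have "\<dots> = expect_after t (\<lambda>s. ennreal (potential s)) np_init
      + expect_after t unfinished_weight np_init"
    unfolding expect_after_add[OF np_inv_init, symmetric] by (simp add: expect_after_def)
  also have "\<dots> \<le> ennreal (potential np_init) + ennreal (decay ^ j) * unfinished_weight np_init"
    unfolding t_def by (intro add_mono potential_supermartingale unfinished_weight_decay np_inv_init)
  also have "\<dots> = ennreal (real (K - 1) * p powr M + decay ^ j * 2 ^ (K - 1))"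
    using decay(1) by (simp add: potential_init unfinished_weight_init ennreal_mult)
  finally have "ennreal (measure \<Omega> {\<omega> \<in> space \<Omega>. \<not> np_correct K M \<sigma> \<omega>})
      \<le> ennreal (real (K - 1) * p powr M + decay ^ j * 2 ^ (K - 1))"
    by (simp only: emeasure_eq_measure)
  then show ?thesis using decay(1) by (subst (asm) ennreal_le_iff) auto
qed

end

theorem mainTheorem13:
  fixes K :: nat and p M :: real and f :: "nat \<Rightarrow> nat set \<Rightarrow> real" and \<sigma> :: "nat \<Rightarrow> nat"
  assumes "K \<ge> 2" and "0 < p" and "p < 1" and "M > 0"
    and "is_pref K f" and "is_ranking K p f \<sigma>"
  shows "{\<omega> \<in> space (Omega K f). \<not> np_correct K M \<sigma> \<omega>} \<in> sets (Omega K f)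
         \<and> measure (Omega K f) {\<omega> \<in> space (Omega K f). \<not> np_correct K M \<sigma> \<omega>}
             \<le> real (K - 1) * p powr M"
proof -
  interpret np_setting K p M f \<sigma> using assms by unfold_locales
  have "{\<omega> \<in> space \<Omega>. \<not> np_correct K M \<sigma> \<omega>} \<in> sets \<Omega>"
    unfolding np_error_event using sets_not_finished_correctly by (intro sets.countable_INT) auto
  moreover have "(\<lambda>j. real (K - 1) * p powr M + decay ^ j * 2 ^ (K - 1))
      \<longlonglongrightarrow> real (K - 1) * p powr M + 0 * 2 ^ (K - 1)"
    using decay by (intro tendsto_intros LIMSEQ_power_zero) auto
  then have "measure \<Omega> {\<omega> \<in> space \<Omega>. \<not> np_correct K M \<sigma> \<omega>}
      \<le> real (K - 1) * p powr M + 0 * 2 ^ (K - 1)"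
    by (rule LIMSEQ_le_const) (use np_error_prob_le in blast)
  ultimately show ?thesis by simp
qed

end
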